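(* Let $r>1$ be an integer and $\mathcal{Z}\subseteq\{1,2,\dots,r-1\}$. Define integers $\xi_1,\dots,\xi_r$ by $\xi_1=1$ and, for $2\le\ell\le r$, $\xi_\ell=\xi_{\ell-1}-1$ if $\ell-1\in\mathcal{Z}$ and $\xi_\ell=2\xi_{\ell-1}$ otherwise. Then $\mathcal{Z}$ is admissible for $(1,1,r)$ if and only if $\xi_\ell>0$ for all $\ell=1,\dots,r$.
   Context: For integers $n,\ell>0$ and a finite-support integer sequence $\mu=(\mu_i)_{i\ge1}$, $\mathsf{K}_\ell(\mu,n)=n^\ell-\sum_{i=1}^{\ell}\mu_i n^{\ell-i}$ (with $0^0=1$). With $n_0=n_1=1$, for a pair $(\eta,\omega)$ of nonnegative integer sequences $(\eta_\ell)_{\ell\ge1},(\omega_\ell)_{\ell\ge1}$ with finite support, let $\mathsf{K}^\pm_\ell=\mathsf{K}_\ell(\eta\pm\omega,n_0\pm n_1)$, let $\mathsf{r}(\eta,\omega)$ be the largest index in the union of their supports, and $\mathsf{K}^\pm=\mathsf{K}^\pm_{\mathsf{r}(\eta,\omega)}$. A subset $\mathcal{Z}\subseteq\{1,\dots,r-1\}$ is admissible for $(n_0,n_1,r)$ if there exists such a pair $(\eta,\omega)$ with $\mathsf{r}(\eta,\omega)=r$ and $\mathsf{K}^+=\mathsf{K}^-=0$ such that, for $\ell\in\{1,\dots,r-1\}$, the inequality $\mathsf{K}^+_\ell\ge|\mathsf{K}^-_\ell|$ fails exactly when $\ell\in\mathcal{Z}$. *)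

theory Defs
  imports Main
begin

text \<open>Sequences \<open>(\<mu>_i)_{i \<ge> 1}\<close> are modelled as functions \<open>nat \<Rightarrow> int\<close>; the value at index 0 is ignored.\<close>

definition K :: "nat \<Rightarrow> (nat \<Rightarrow> int) \<Rightarrow> int \<Rightarrow> int" where
  "K l \<mu> n = n ^ l - (\<Sum>i = 1..l. \<mu> i * n ^ (l - i))"

definition supp2 :: "(nat \<Rightarrow> int) \<Rightarrow> (nat \<Rightarrow> int) \<Rightarrow> nat set" where
  "supp2 \<eta> \<omega> = {i. 1 \<le> i \<and> (\<eta> i \<noteq> 0 \<or> \<omega> i \<noteq> 0)}"

definition rr :: "(nat \<Rightarrow> int) \<Rightarrow> (nat \<Rightarrow> int) \<Rightarrow> nat" where
  "rr \<eta> \<omega> = Max (supp2 \<eta> \<omega>)"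

definition Kp :: "int \<Rightarrow> int \<Rightarrow> (nat \<Rightarrow> int) \<Rightarrow> (nat \<Rightarrow> int) \<Rightarrow> nat \<Rightarrow> int" where
  "Kp n0 n1 \<eta> \<omega> l = K l (\<lambda>i. \<eta> i + \<omega> i) (n0 + n1)"

definition Km :: "int \<Rightarrow> int \<Rightarrow> (nat \<Rightarrow> int) \<Rightarrow> (nat \<Rightarrow> int) \<Rightarrow> nat \<Rightarrow> int" where
  "Km n0 n1 \<eta> \<omega> l = K l (\<lambda>i. \<eta> i - \<omega> i) (n0 - n1)"

definition admissible :: "int \<Rightarrow> int \<Rightarrow> nat \<Rightarrow> nat set \<Rightarrow> bool" where
  "admissible n0 n1 r Z \<longleftrightarrow>
     (\<exists>\<eta> \<omega>. (\<forall>i. 0 \<le> \<eta> i) \<and> (\<forall>i. 0 \<le> \<omega> i) \<and>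
        finite (supp2 \<eta> \<omega>) \<and> supp2 \<eta> \<omega> \<noteq> {} \<and> rr \<eta> \<omega> = r \<and>
        Kp n0 n1 \<eta> \<omega> (rr \<eta> \<omega>) = 0 \<and> Km n0 n1 \<eta> \<omega> (rr \<eta> \<omega>) = 0 \<and>
        (\<forall>l\<in>{1..r-1}. (\<not> (Kp n0 n1 \<eta> \<omega> l \<ge> \<bar>Km n0 n1 \<eta> \<omega> l\<bar>)) \<longleftrightarrow> l \<in> Z))"

fun xi :: "nat set \<Rightarrow> nat \<Rightarrow> int" where
  "xi Z 0 = 1"
| "xi Z (Suc 0) = 1"
| "xi Z (Suc (Suc l)) = (if Suc l \<in> Z then xi Z (Suc l) - 1 else 2 * xi Z (Suc l))"

end

theory Submission
  imports Defs
begin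

text \<open>For \<open>n\<^sub>0 = n\<^sub>1 = 1\<close> the sequences become \<open>K\<^sup>-(l) = \<omega> l - \<eta> l\<close> and
  \<open>K\<^sup>+(l) = 2 K\<^sup>+(l - 1) - (\<eta> l + \<omega> l)\<close>, \<open>K\<^sup>+(0) = 1\<close>. As \<open>|K\<^sup>-(l)| \<le> \<eta> l + \<omega> l\<close>,
  an index \<open>l \<in> Z\<close> forces \<open>K\<^sup>+(l) < K\<^sup>+(l - 1)\<close>, and every index gives
  \<open>K\<^sup>+(l) \<le> 2 K\<^sup>+(l - 1)\<close>; comparing with the recursion of \<open>\<xi>\<close> yields
  \<open>K\<^sup>+(l - 1) \<le> \<xi> l\<close>. Moreover \<open>K\<^sup>+(l - 1) > 0\<close> for \<open>l \<le> r\<close>: a nonpositive value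
  can never grow again, yet \<open>K\<^sup>+(r) = 0\<close> with \<open>\<eta> r + \<omega> r > 0\<close>.
  Conversely, \<open>\<eta> l = \<xi> l + 1\<close> on \<open>Z\<close> and \<open>\<eta> r = \<omega> r = \<xi> r\<close> (zero elsewhere)
  give \<open>K\<^sup>+(l - 1) = \<xi> l\<close> for \<open>l \<le> r\<close> and \<open>K\<^sup>+(r) = K\<^sup>-(r) = 0\<close>.\<close>

lemma K_0: "K 0 \<mu> n = 1"
  by (simp add: K_def)

lemma K_Suc: "K (Suc l) \<mu> n = n * K l \<mu> n - \<mu> (Suc l)"
proof -
  have "(\<Sum>i = 1..l. \<mu> i * n ^ (Suc l - i)) = n * (\<Sum>i = 1..l. \<mu> i * n ^ (l - i))"
    unfolding sum_distrib_left by (rule sum.cong) (auto simp: Suc_diff_le)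
  then show ?thesis
    by (simp add: K_def algebra_simps)
qed

lemma Kp_1_1_0: "Kp 1 1 \<eta> \<omega> 0 = 1"
  by (simp add: Kp_def K_0)

lemma Kp_1_1_Suc: "Kp 1 1 \<eta> \<omega> (Suc l) = 2 * Kp 1 1 \<eta> \<omega> l - (\<eta> (Suc l) + \<omega> (Suc l))"
  by (simp add: Kp_def K_Suc)

lemma Km_1_1_Suc: "Km 1 1 \<eta> \<omega> (Suc l) = \<omega> (Suc l) - \<eta> (Suc l)"
  by (simp add: Km_def K_Suc)

lemma Kp_1_1_Suc_le_double:
  assumes "\<forall>i. 0 \<le> \<eta> i" and "\<forall>i. 0 \<le> \<omega> i"
  shows "Kp 1 1 \<eta> \<omega> (Suc l) \<le> 2 * Kp 1 1 \<eta> \<omega> l"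
proof -
  have "0 \<le> \<eta> (Suc l) + \<omega> (Suc l)"
    using assms by simp
  then show ?thesis
    by (simp add: Kp_1_1_Suc)
qed

lemma Kp_1_1_Suc_less_if_less_abs_Km:
  assumes "\<forall>i. 0 \<le> \<eta> i" and "\<forall>i. 0 \<le> \<omega> i"
    and "Kp 1 1 \<eta> \<omega> (Suc l) < \<bar>Km 1 1 \<eta> \<omega> (Suc l)\<bar>"
  shows "Kp 1 1 \<eta> \<omega> (Suc l) < Kp 1 1 \<eta> \<omega> l"
proof -
  have "\<bar>Km 1 1 \<eta> \<omega> (Suc l)\<bar> \<le> \<eta> (Suc l) + \<omega> (Suc l)"
    using assms(1,2) by (simp add: Km_1_1_Suc abs_le_iff)
  with assms(3) show ?thesis
    by (simp add: Kp_1_1_Suc)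
qed

lemma nonpos_persists_if_le_double:
  fixes k :: "nat \<Rightarrow> int"
  assumes le_double: "\<And>l. k (Suc l) \<le> 2 * k l" and "k l \<le> 0" and "l \<le> m"
  shows "k m \<le> 0"
  using \<open>l \<le> m\<close>
proof (induction m rule: dec_induct)
  case base
  then show ?case using \<open>k l \<le> 0\<close> .
next
  case (step m)
  then show ?case using le_double[of m] by linarith
qed

lemma le_xi_if_dominated_by_xi_recursion:
  fixes k :: "nat \<Rightarrow> int"
  assumes "k 0 \<le> 1"
    and "\<And>l. l < m \<Longrightarrow> k (Suc l) \<le> (if Suc l \<in> Z then k l - 1 else 2 * k l)"
    and "l \<le> m"
  shows "k l \<le> xi Z (Suc l)"
  using assms(3)
proof (induction l)
  case 0
  then show ?case using assms(1) by simp
next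
  case (Suc l)
  then have "k l \<le> xi Z (Suc l)" and "k (Suc l) \<le> (if Suc l \<in> Z then k l - 1 else 2 * k l)"
    using assms(2) by simp_all
  then show ?case by (simp split: if_splits)
qed

lemma xi_pos_if_admissible_1_1:
  assumes "r > 1" and "admissible 1 1 r Z"
  shows "\<forall>l\<in>{1..r}. xi Z l > 0"
proof -
  obtain \<eta> \<omega> where \<eta>_nonneg: "\<forall>i. 0 \<le> \<eta> i" and \<omega>_nonneg: "\<forall>i. 0 \<le> \<omega> i"
    and fin: "finite (supp2 \<eta> \<omega>)" and ne: "supp2 \<eta> \<omega> \<noteq> {}" and rr: "rr \<eta> \<omega> = r"
    and Kp_r: "Kp 1 1 \<eta> \<omega> r = 0"
    and violations: "\<forall>l\<in>{1..r-1}. \<not> Kp 1 1 \<eta> \<omega> l \<ge> \<bar>Km 1 1 \<eta> \<omega> l\<bar> \<longleftrightarrow> l \<in> Z"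
    using assms(2) unfolding admissible_def by auto
  define k where "k = Kp 1 1 \<eta> \<omega>"
  obtain m where r: "r = Suc m"
    using assms(1) by (cases r) auto
  have le_double: "k (Suc l) \<le> 2 * k l" for l
    unfolding k_def using \<eta>_nonneg \<omega>_nonneg by (rule Kp_1_1_Suc_le_double)
  have "r \<in> supp2 \<eta> \<omega>"
    using Max_in[OF fin ne] rr by (simp add: rr_def)
  then have "\<eta> r + \<omega> r > 0"
    using \<eta>_nonneg \<omega>_nonneg unfolding supp2_def
    by (auto simp: add_pos_nonneg add_nonneg_pos order_neq_le_trans)
  then have "k m > 0"
    using Kp_r by (simp add: k_def r Kp_1_1_Suc)
  have pos: "k l > 0" if "l \<le> m" for l
    using nonpos_persists_if_le_double[of k l m] le_double that \<open>k m > 0\<close> by force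
  have step: "k (Suc l) \<le> (if Suc l \<in> Z then k l - 1 else 2 * k l)" if "l < m" for l
  proof (cases "Suc l \<in> Z")
    case True
    moreover have "Suc l \<in> {1..r-1}"
      using that r by simp
    ultimately have "k (Suc l) < \<bar>Km 1 1 \<eta> \<omega> (Suc l)\<bar>"
      using violations unfolding k_def by (meson not_le)
    with True show ?thesis
      using Kp_1_1_Suc_less_if_less_abs_Km[OF \<eta>_nonneg \<omega>_nonneg] by (simp add: k_def)
  qed (simp add: le_double)
  show ?thesis
  proof
    fix l
    assume "l \<in> {1..r}"
    then obtain j where "l = Suc j" and "j \<le> m"
      using r by (cases l) auto
    then show "xi Z l > 0"
      using pos le_xi_if_dominated_by_xi_recursion[of k m Z j, OF _ step]
      by (fastforce simp: k_def Kp_1_1_0)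
  qed
qed

lemma admissible_1_1_if_xi_pos:
  assumes "r > 1" and Z: "Z \<subseteq> {1..r-1}" and xi_pos: "\<forall>l\<in>{1..r}. xi Z l > 0"
  shows "admissible 1 1 r Z"
proof -
  define \<eta> where "\<eta> l = (if l \<in> Z then xi Z l + 1 else if l = r then xi Z r else 0)" for l
  define \<omega> where "\<omega> l = (if l = r then xi Z r else 0)" for l
  obtain m where r: "r = Suc m"
    using assms(1) by (cases r) auto
  have "r \<notin> Z"
    using Z r by auto
  have "xi Z r > 0"
    using xi_pos r by simp
  have "\<forall>i. 0 \<le> \<eta> i" and "\<forall>i. 0 \<le> \<omega> i"
    using xi_pos Z \<open>r \<notin> Z\<close> \<open>xi Z r > 0\<close> by (fastforce simp: \<eta>_def \<omega>_def order_less_imp_le)+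
  have supp: "supp2 \<eta> \<omega> \<subseteq> {1..r}" and "r \<in> supp2 \<eta> \<omega>"
    using Z \<open>xi Z r > 0\<close> r unfolding supp2_def \<eta>_def \<omega>_def by auto
  have "finite (supp2 \<eta> \<omega>)"
    using supp by (rule finite_subset) simp
  have "rr \<eta> \<omega> = r"
    unfolding rr_def using supp \<open>r \<in> supp2 \<eta> \<omega>\<close>
    by (intro Max_eqI[OF \<open>finite (supp2 \<eta> \<omega>)\<close>]) auto
  define k where "k = Kp 1 1 \<eta> \<omega>"
  have k_eq: "k l = xi Z (Suc l)" if "l \<le> m" for l
    using that
  proof (induction l)
    case 0
    then show ?case by (simp add: k_def Kp_1_1_0)
  next
    case (Suc l)
    then show ?case by (simp add: k_def Kp_1_1_Suc r \<eta>_def \<omega>_def)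
  qed
  have Kp_r: "k r = 0" and Km_r: "Km 1 1 \<eta> \<omega> r = 0"
    using k_eq[of m] \<open>r \<notin> Z\<close> by (simp_all add: r k_def Kp_1_1_Suc Km_1_1_Suc \<eta>_def \<omega>_def)
  have "\<not> k l \<ge> \<bar>Km 1 1 \<eta> \<omega> l\<bar> \<longleftrightarrow> l \<in> Z" if l: "l \<in> {1..r-1}" for l
  proof -
    obtain j where j: "l = Suc j"
      using l by (cases l) auto
    have "k l = xi Z (Suc l)" and "Km 1 1 \<eta> \<omega> l = - \<eta> l"
      using k_eq[of l] l r by (simp_all add: j Km_1_1_Suc \<omega>_def)
    moreover have "xi Z l > 0"
      using xi_pos l by auto
    ultimately show ?thesis
      using l by (auto simp: \<eta>_def j)
  qed
  with \<open>\<forall>i. 0 \<le> \<eta> i\<close> \<open>\<forall>i. 0 \<le> \<omega> i\<close> \<open>finite (supp2 \<eta> \<omega>)\<close> \<open>r \<in> supp2 \<eta> \<omega>\<close> \<open>rr \<eta> \<omega> = r\<close> Kp_r Km_r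
  show ?thesis
    unfolding admissible_def k_def by blast
qed

theorem lemma5:
  fixes r :: nat and Z :: "nat set"
  assumes "r > 1" and "Z \<subseteq> {1..r-1}"
  shows "admissible 1 1 r Z \<longleftrightarrow> (\<forall>l\<in>{1..r}. xi Z l > 0)"
  using xi_pos_if_admissible_1_1 admissible_1_1_if_xi_pos assms by blast

end
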